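(* Let $\mathcal{X}=\mathcal{Y}=\mathcal{Z}=\mathbb{C}^2$, $u=\tfrac{1}{\sqrt2}(|00\rangle+|11\rangle)\in\mathcal{X}\otimes\mathcal{Z}$, $w_1=\cos(\pi/8)|00\rangle+\sin(\pi/8)|11\rangle\in\mathcal{Y}\otimes\mathcal{Z}$, $\Pi_1=w_1w_1^*$ and $\Pi_0=\mathbb{I}-\Pi_1$. Then: (1) $\max\{\langle \Pi_1,(\Phi\otimes\mathrm{id}_{\mathrm{L}(\mathcal{Z})})(uu^* )\rangle : \Phi \text{ a quantum channel from } \mathrm{L}(\mathcal{X}) \text{ to } \mathrm{L}(\mathcal{Y})\}=\cos^2(\pi/8)$; (2) there exists a quantum channel $\Psi$ from $\mathrm{L}(\mathcal{X}_1\otimes\mathcal{X}_2)$ to $\mathrm{L}(\mathcal{Y}_1\otimes\mathcal{Y}_2)$ (with $\mathcal{X}_i,\mathcal{Y}_i$ copies of $\mathbb{C}^2$) such that the state $\sigma=(\Psi\otimes\mathrm{id})(uu^*\otimes uu^* )$ on $(\mathcal{Y}_1\otimes\mathcal{Z}_1)\otimes(\mathcal{Y}_2\otimes\mathcal{Z}_2)$ (where the $k$-th copy of $uu^*$ lives on $\mathcal{X}_k\otimes\mathcal{Z}_k$) satisfies $\langle \Pi_1\otimes\Pi_0+\Pi_0\otimes\Pi_1,\sigma\rangle=1$. In particular, in two independent parallel copies of this one-round test the prover can obtain at least one winning outcome (outcome of $\Pi_1$) with probability $1$, although a single copy is won with probability at most $\cos^2(\pi/8)<1$.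
   Context: A quantum channel is a completely positive trace-preserving linear map. The test: the verifier prepares $u$, sends the $\mathcal{X}$ part to the prover, who applies a channel and returns a qubit in $\mathcal{Y}$; the verifier then measures $\mathcal{Y}\otimes\mathcal{Z}$ with the projective measurement $\{\Pi_0,\Pi_1\}$, outcome $\Pi_1$ being "winning". *)

theory Defs
  imports "Jordan_Normal_Form.Matrix" "HOL-Library.Complex_Order"
begin

text \<open>Tensor products are Kronecker products, with index of (A tensor B) being
  i * dim B + j (first factor most significant).\<close>

definition ctrans :: "complex mat \<Rightarrow> complex mat" where
  "ctrans A = mat (dim_col A) (dim_row A) (\<lambda>(i,j). cnj (A $$ (j,i)))"

definition mtrace :: "complex mat \<Rightarrow> complex" where
  "mtrace A = (\<Sum>i<dim_row A. A $$ (i,i))"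

definition hs_inner :: "complex mat \<Rightarrow> complex mat \<Rightarrow> complex" where
  "hs_inner A B = mtrace (ctrans A * B)"

definition outer :: "complex vec \<Rightarrow> complex vec \<Rightarrow> complex mat" where
  "outer v w = mat (dim_vec v) (dim_vec w) (\<lambda>(i,j). vec_index v i * cnj (vec_index w j))"

definition kron :: "complex mat \<Rightarrow> complex mat \<Rightarrow> complex mat" where
  "kron A B = mat (dim_row A * dim_row B) (dim_col A * dim_col B)
     (\<lambda>(i,j). A $$ (i div dim_row B, j div dim_col B) * B $$ (i mod dim_row B, j mod dim_col B))"

text \<open>Positive semidefinite n x n matrix (order on complex: 0 \<le> z iff z real nonnegative).\<close>
definition psd :: "nat \<Rightarrow> complex mat \<Rightarrow> bool" where
  "psd n A \<longleftrightarrow> A \<in> carrier_mat n n \<and>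
     (\<forall>v \<in> carrier_vec n. 0 \<le> (\<Sum>i<n. cnj (vec_index v i) * vec_index (A *\<^sub>v v) i))"

text \<open>(Phi tensor id_{L(C^k)}) applied to X in L(C^n tensor C^k), giving an element of
  L(C^m tensor C^k): the (a,b) block w.r.t. the second factor is Phi of the (a,b) block.\<close>
definition blk :: "nat \<Rightarrow> nat \<Rightarrow> complex mat \<Rightarrow> nat \<Rightarrow> nat \<Rightarrow> complex mat" where
  "blk n k X a b = mat n n (\<lambda>(x,y). X $$ (x * k + a, y * k + b))"

definition ext_id :: "(complex mat \<Rightarrow> complex mat) \<Rightarrow> nat \<Rightarrow> nat \<Rightarrow> nat \<Rightarrow> complex mat \<Rightarrow> complex mat" where
  "ext_id \<Phi> n m k X = mat (m * k) (m * k)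
     (\<lambda>(i,j). \<Phi> (blk n k X (i mod k) (j mod k)) $$ (i div k, j div k))"

definition channel :: "nat \<Rightarrow> nat \<Rightarrow> (complex mat \<Rightarrow> complex mat) \<Rightarrow> bool" where
  "channel n m \<Phi> \<longleftrightarrow>
     (\<forall>X \<in> carrier_mat n n. \<Phi> X \<in> carrier_mat m m) \<and>
     (\<forall>X \<in> carrier_mat n n. \<forall>Y \<in> carrier_mat n n. \<Phi> (X + Y) = \<Phi> X + \<Phi> Y) \<and>
     (\<forall>X \<in> carrier_mat n n. \<forall>c. \<Phi> (c \<cdot>\<^sub>m X) = c \<cdot>\<^sub>m \<Phi> X) \<and>
     (\<forall>X \<in> carrier_mat n n. mtrace (\<Phi> X) = mtrace X) \<and>
     (\<forall>k. \<forall>X. psd (n * k) X \<longrightarrow> psd (m * k) (ext_id \<Phi> n m k X))"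

text \<open>Concrete objects. Basis index of |xz> in C^2 tensor C^2 is 2x+z.\<close>
definition u_vec :: "complex vec" where
  "u_vec = vec 4 (\<lambda>i. if i = 0 \<or> i = 3 then complex_of_real (1 / sqrt 2) else 0)"

definition w1_vec :: "complex vec" where
  "w1_vec = vec 4 (\<lambda>i. if i = 0 then complex_of_real (cos (pi/8))
                       else if i = 3 then complex_of_real (sin (pi/8)) else 0)"

definition Pi1 :: "complex mat" where "Pi1 = outer w1_vec w1_vec"
definition Pi0 :: "complex mat" where "Pi0 = 1\<^sub>m 4 - Pi1"

text \<open>Permutation of four qubits swapping the 2nd and 3rd tensor factor:
  (A1 B1 A2 B2) <-> (A1 A2 B1 B2).  Index of |abcd> is 8a+4b+2c+d.\<close>
definition swap_mid :: "nat \<Rightarrow> nat" where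
  "swap_mid i = 8 * (i div 8) + 4 * ((i div 2) mod 2) + 2 * ((i div 4) mod 2) + i mod 2"

definition Pswap :: "complex mat" where
  "Pswap = mat 16 16 (\<lambda>(i,j). if j = swap_mid i then 1 else 0)"

end

theory Submission
  imports Defs
begin

text \<open>Write \<open>c = cos(\<pi>/8)\<close> and \<open>s = sin(\<pi>/8)\<close>. A single copy: the output
  \<open>\<rho> = (\<Phi> \<otimes> id)(uu\<^sup>*)\<close> is positive semidefinite, and trace preservation of \<open>\<Phi>\<close> forces each
  of its two \<open>Z\<close>-diagonal blocks to have trace \<open>1/2\<close>.
  Since \<open>\<Pi>\<^sub>1\<close> lives on \<open>span{|00\<rangle>, |11\<rangle>}\<close>, its value is
  \<open>c\<^sup>2 \<rho>\<^sub>0\<^sub>0 + cs(\<rho>\<^sub>0\<^sub>3 + \<rho>\<^sub>3\<^sub>0) + s\<^sup>2 \<rho>\<^sub>3\<^sub>3\<close>, and positivity gives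
  \<open>\<rho>\<^sub>0\<^sub>3 + \<rho>\<^sub>3\<^sub>0 \<le> \<rho>\<^sub>0\<^sub>0 + \<rho>\<^sub>3\<^sub>3\<close> and \<open>\<rho>\<^sub>0\<^sub>0, \<rho>\<^sub>3\<^sub>3 \<le> 1/2\<close>, whence the bound
  \<open>(1 + 2cs)/2 = c\<^sup>2\<close>; the identity channel attains it.

  Two copies: flipping the sign of every basis state of \<open>X\<^sub>1 \<otimes> X\<^sub>2\<close> except \<open>|00\<rangle>\<close> turns
  \<open>u \<otimes> u\<close> into \<open>(e\<^sub>0e\<^sub>0 - e\<^sub>0e\<^sub>1 - e\<^sub>1e\<^sub>0 - e\<^sub>1e\<^sub>1)/2\<close> with \<open>e\<^sub>0 = |00\<rangle>, e\<^sub>1 = |11\<rangle>\<close>.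
  Because \<open>c\<^sup>2 - s\<^sup>2 = 2cs\<close>, this vector is orthogonal to both \<open>w\<^sub>1 \<otimes> w\<^sub>1\<close> and
  \<open>w\<^sub>0 \<otimes> w\<^sub>0\<close> (\<open>w\<^sub>0 = -s e\<^sub>0 + c e\<^sub>1\<close>), so exactly one of the two tests is won.\<close>

lemma hs_inner_eq_sum:
  assumes "A \<in> carrier_mat n n" "B \<in> carrier_mat n n"
  shows "hs_inner A B = (\<Sum>i<n. \<Sum>j<n. cnj (A $$ (j,i)) * B $$ (j,i))"
  using assms unfolding hs_inner_def mtrace_def ctrans_def
  by (auto simp: scalar_prod_def lessThan_atLeast0 intro!: sum.cong)

lemma hs_inner_supported:
  assumes "A \<in> carrier_mat n n" "S \<subseteq> {..<n}" "\<And>i. i < n \<Longrightarrow> i \<notin> S \<Longrightarrow> f i = 0"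
  shows "hs_inner A (mat n n (\<lambda>(i,j). f i * f j)) = (\<Sum>i\<in>S. \<Sum>j\<in>S. cnj (A $$ (j,i)) * (f j * f i))"
proof -
  have "hs_inner A (mat n n (\<lambda>(i,j). f i * f j)) = (\<Sum>i<n. \<Sum>j<n. cnj (A $$ (j,i)) * (f j * f i))"
    using assms(1) by (simp add: hs_inner_eq_sum)
  also have "\<dots> = (\<Sum>i<n. \<Sum>j\<in>S. cnj (A $$ (j,i)) * (f j * f i))"
    using assms(2,3) by (intro sum.cong refl sum.mono_neutral_right) auto
  also have "\<dots> = (\<Sum>i\<in>S. \<Sum>j\<in>S. cnj (A $$ (j,i)) * (f j * f i))"
    using assms(2,3) by (intro sum.mono_neutral_right) auto
  finally show ?thesis .
qed

lemma psd_quadratic_form: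
  assumes "psd n A" "v \<in> carrier_vec n"
  shows "0 \<le> (\<Sum>i<n. cnj (v $ i) * (\<Sum>j<n. A $$ (i,j) * v $ j))"
proof -
  have A: "A \<in> carrier_mat n n" using assms(1) psd_def by blast
  have "0 \<le> (\<Sum>i<n. cnj (v $ i) * (A *\<^sub>v v) $ i)" using assms psd_def by blast
  also have "\<dots> = (\<Sum>i<n. cnj (v $ i) * (\<Sum>j<n. A $$ (i,j) * v $ j))"
    using A assms(2) by (auto simp: scalar_prod_def lessThan_atLeast0 intro!: sum.cong)
  finally show ?thesis .
qed

lemma psd_diag_nonneg:
  assumes "psd n A" "i < n"
  shows "0 \<le> A $$ (i,i)"
  using psd_quadratic_form[OF assms(1), of "unit_vec n i"] assms(2)
  by (simp add: unit_vec_def if_distrib[of cnj] if_distrib[of "\<lambda>x. x * _"]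
      if_distrib[of "\<lambda>x. _ * x"] cong: if_cong)

lemma psd_offdiag_le:
  assumes "psd n A" "i < n" "j < n" "i \<noteq> j"
  shows "A $$ (i,j) + A $$ (j,i) \<le> A $$ (i,i) + A $$ (j,j)"
proof -
  define v :: "complex vec" where "v = unit_vec n i - unit_vec n j"
  have "0 \<le> (\<Sum>a<n. cnj (v $ a) * (\<Sum>b<n. A $$ (a,b) * v $ b))"
    by (rule psd_quadratic_form[OF assms(1)]) (simp add: v_def)
  also have "\<dots> = (A $$ (i,i) + A $$ (j,j)) - (A $$ (i,j) + A $$ (j,i))"
    using assms(2-4)
    by (simp add: v_def unit_vec_def algebra_simps sum_subtractf sum.distrib
        if_distrib[of cnj] if_distrib[of "\<lambda>x. _ * x"] if_distrib[of "\<lambda>x. x * _"] cong: if_cong)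
  finally show ?thesis by (simp only: diff_ge_0_iff_ge)
qed

lemma psd_outer:
  assumes "v \<in> carrier_vec n"
  shows "psd n (outer v v)"
  unfolding psd_def
proof (intro conjI ballI)
  show "outer v v \<in> carrier_mat n n" using assms by (simp add: outer_def)
  fix x :: "complex vec" assume x: "x \<in> carrier_vec n"
  define z where "z = (\<Sum>j<n. cnj (v $ j) * x $ j)"
  have "(\<Sum>i<n. cnj (x $ i) * (outer v v *\<^sub>v x) $ i) = (\<Sum>i<n. cnj (x $ i) * v $ i * z)"
    using assms x by (auto simp: outer_def scalar_prod_def lessThan_atLeast0 z_def sum_distrib_left
        mult_ac intro!: sum.cong)
  also have "\<dots> = cnj z * z" unfolding z_def by (simp add: sum_distrib_right mult_ac)
  also have "\<dots> = complex_of_real ((Re z)\<^sup>2 + (Im z)\<^sup>2)"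
    by (simp add: complex_mult_cnj mult.commute)
  finally show "0 \<le> (\<Sum>i<n. cnj (x $ i) * (outer v v *\<^sub>v x) $ i)"
    by (simp add: less_eq_complex_def)
qed

definition diag_conj :: "(nat \<Rightarrow> complex) \<Rightarrow> nat \<Rightarrow> complex mat \<Rightarrow> complex mat" where
  "diag_conj d n X = mat n n (\<lambda>(i,j). d i * d j * X $$ (i,j))"

lemma psd_diag_conj:
  assumes "psd n X" "\<And>i. cnj (d i) = d i"
  shows "psd n (diag_conj d n X)"
  unfolding psd_def
proof (intro conjI ballI)
  show "diag_conj d n X \<in> carrier_mat n n" by (simp add: diag_conj_def)
  fix v :: "complex vec" assume v: "v \<in> carrier_vec n"
  define w where "w = vec n (\<lambda>i. d i * v $ i)"
  have X: "X \<in> carrier_mat n n" using assms(1) psd_def by blast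
  have "w \<in> carrier_vec n" by (simp add: w_def)
  then have "0 \<le> (\<Sum>i<n. cnj (w $ i) * (X *\<^sub>v w) $ i)"
    using assms(1) unfolding psd_def by blast
  also have "\<dots> = (\<Sum>i<n. cnj (v $ i) * (diag_conj d n X *\<^sub>v v) $ i)"
  proof (rule sum.cong[OF refl])
    fix i assume i: "i \<in> {..<n}"
    have "cnj (w $ i) * (X *\<^sub>v w) $ i = cnj (v $ i) * (\<Sum>j<n. d i * d j * X $$ (i,j) * v $ j)"
      using i X v assms(2)
      by (simp add: w_def scalar_prod_def lessThan_atLeast0 sum_distrib_left mult_ac)
    also have "\<dots> = cnj (v $ i) * (diag_conj d n X *\<^sub>v v) $ i"
      using i v by (simp add: diag_conj_def scalar_prod_def lessThan_atLeast0)
    finally show "cnj (w $ i) * (X *\<^sub>v w) $ i = cnj (v $ i) * (diag_conj d n X *\<^sub>v v) $ i" .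
  qed
  finally show "0 \<le> (\<Sum>i<n. cnj (v $ i) * (diag_conj d n X *\<^sub>v v) $ i)" .
qed

lemma ext_id_diag_conj:
  "ext_id (diag_conj d n) n n k X = diag_conj (\<lambda>i. d (i div k)) (n * k) X"
proof (rule eq_matI)
  fix i j assume "i < dim_row (diag_conj (\<lambda>i. d (i div k)) (n * k) X)"
    "j < dim_col (diag_conj (\<lambda>i. d (i div k)) (n * k) X)"
  then have ij: "i < n * k" "j < n * k" by (simp_all add: diag_conj_def)
  then have "i div k < n" "j div k < n" "0 < k"
    by (simp_all add: less_mult_imp_div_less) (cases k; simp)
  then show "ext_id (diag_conj d n) n n k X $$ (i, j) = diag_conj (\<lambda>i. d (i div k)) (n * k) X $$ (i, j)"
    using ij by (simp add: ext_id_def diag_conj_def blk_def)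
qed (simp_all add: ext_id_def diag_conj_def)

lemma channel_diag_conj:
  assumes "\<And>i. cnj (d i) = d i" "\<And>i. d i * d i = 1"
  shows "channel n n (diag_conj d n)"
  unfolding channel_def
proof (intro conjI ballI allI impI)
  fix X Y :: "complex mat" and c :: complex
  assume X: "X \<in> carrier_mat n n" and Y: "Y \<in> carrier_mat n n"
  show "diag_conj d n X \<in> carrier_mat n n" by (simp add: diag_conj_def)
  show "diag_conj d n (X + Y) = diag_conj d n X + diag_conj d n Y"
    using X Y by (intro eq_matI) (auto simp: diag_conj_def distrib_left)
  show "diag_conj d n (c \<cdot>\<^sub>m X) = c \<cdot>\<^sub>m diag_conj d n X"
    using X by (intro eq_matI) (auto simp: diag_conj_def)
  show "mtrace (diag_conj d n X) = mtrace X"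
    using X assms(2) by (simp add: diag_conj_def mtrace_def)
next
  fix k and X :: "complex mat"
  assume "psd (n * k) X"
  then show "psd (n * k) (ext_id (diag_conj d n) n n k X)"
    unfolding ext_id_diag_conj by (rule psd_diag_conj) (use assms(1) in simp)
qed

lemma ext_id_block_trace:
  assumes "channel n m \<Phi>" "a < k"
  shows "(\<Sum>x<m. ext_id \<Phi> n m k X $$ (x * k + a, x * k + a)) = mtrace (blk n k X a a)"
proof -
  have "blk n k X a a \<in> carrier_mat n n" by (simp add: blk_def)
  then have "\<Phi> (blk n k X a a) \<in> carrier_mat m m" "mtrace (\<Phi> (blk n k X a a)) = mtrace (blk n k X a a)"
    using assms(1) unfolding channel_def by auto
  moreover have "x * k + a < m * k" if "x < m" for x
  proof -
    have "x * k + a < (x + 1) * k" using assms(2) by simp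
    also have "\<dots> \<le> m * k" using that by (intro mult_right_mono) auto
    finally show ?thesis .
  qed
  ultimately show ?thesis
    using assms(2) by (simp add: ext_id_def mtrace_def)
qed

lemma cos_pi_div_eight_sq: "(cos (pi/8))\<^sup>2 = (2 + sqrt 2) / 4"
  using cos_double_cos[of "pi/8"] cos_45 by (simp add: field_simps)

lemma sin_pi_div_eight_sq: "(sin (pi/8))\<^sup>2 = (2 - sqrt 2) / 4"
  using sin_cos_squared_add[of "pi/8"] cos_pi_div_eight_sq by (simp add: field_simps)

lemma cos_sin_pi_div_eight: "cos (pi/8) * sin (pi/8) = sqrt 2 / 4"
  using sin_double[of "pi/8"] sin_45 by (simp add: mult_ac)

lemma sum_lessThan_4: "(\<Sum>i<(4::nat). f i) = f 0 + f 1 + f 2 + (f 3 :: 'a :: comm_monoid_add)"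
  by (simp add: eval_nat_numeral add.assoc)

lemma Pi1_carrier: "Pi1 \<in> carrier_mat 4 4"
  by (simp add: Pi1_def outer_def w1_vec_def)

lemma Pi1_entry_zero:
  assumes "i < 4" "j < 4" "i \<in> {1,2} \<or> j \<in> {1,2}"
  shows "Pi1 $$ (i,j) = 0"
  using assms by (auto simp: Pi1_def outer_def w1_vec_def)

lemma Pi1_entries:
  "Pi1 $$ (0,0) = complex_of_real ((2 + sqrt 2) / 4)"
  "Pi1 $$ (0,3) = complex_of_real (sqrt 2 / 4)"
  "Pi1 $$ (3,0) = complex_of_real (sqrt 2 / 4)"
  "Pi1 $$ (3,3) = complex_of_real ((2 - sqrt 2) / 4)"
proof -
  have "Pi1 $$ (0,0) = complex_of_real ((cos (pi/8))\<^sup>2)"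
    "Pi1 $$ (0,3) = complex_of_real (cos (pi/8) * sin (pi/8))"
    "Pi1 $$ (3,0) = complex_of_real (cos (pi/8) * sin (pi/8))"
    "Pi1 $$ (3,3) = complex_of_real ((sin (pi/8))\<^sup>2)"
    by (simp_all add: Pi1_def outer_def w1_vec_def power2_eq_square mult.commute)
  then show "Pi1 $$ (0,0) = complex_of_real ((2 + sqrt 2) / 4)"
    "Pi1 $$ (0,3) = complex_of_real (sqrt 2 / 4)"
    "Pi1 $$ (3,0) = complex_of_real (sqrt 2 / 4)"
    "Pi1 $$ (3,3) = complex_of_real ((2 - sqrt 2) / 4)"
    by (simp_all only: cos_pi_div_eight_sq sin_pi_div_eight_sq cos_sin_pi_div_eight)
qed

lemma Pi0_entries:
  "Pi0 $$ (0,0) = complex_of_real ((2 - sqrt 2) / 4)"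
  "Pi0 $$ (0,3) = - complex_of_real (sqrt 2 / 4)"
  "Pi0 $$ (3,0) = - complex_of_real (sqrt 2 / 4)"
  "Pi0 $$ (3,3) = complex_of_real ((2 + sqrt 2) / 4)"
  using Pi1_carrier by (simp_all add: Pi0_def Pi1_entries field_simps)

lemma hs_inner_Pi1:
  assumes "R \<in> carrier_mat 4 4"
  shows "hs_inner Pi1 R = complex_of_real ((2 + sqrt 2) / 4) * R $$ (0,0)
    + complex_of_real (sqrt 2 / 4) * (R $$ (0,3) + R $$ (3,0))
    + complex_of_real ((2 - sqrt 2) / 4) * R $$ (3,3)"
  by (simp add: hs_inner_eq_sum[OF Pi1_carrier assms] sum_lessThan_4 Pi1_entry_zero Pi1_entries
      algebra_simps)

lemma hs_inner_Pi1_le: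
  assumes R: "psd 4 R"
    and trace_0: "R $$ (0,0) + R $$ (2,2) = 1/2" and trace_1: "R $$ (1,1) + R $$ (3,3) = 1/2"
  shows "hs_inner Pi1 R \<le> complex_of_real ((2 + sqrt 2) / 4)"
proof -
  define p q r where "p = complex_of_real ((2 + sqrt 2) / 4)" and "q = complex_of_real (sqrt 2 / 4)"
    and "r = complex_of_real ((2 - sqrt 2) / 4)"
  have "0 \<le> q" "0 \<le> p + q" "0 \<le> r + q"
    by (simp_all add: p_def q_def r_def less_eq_complex_def field_simps)
  have "R $$ (0,0) = 1/2 - R $$ (2,2)" "R $$ (3,3) = 1/2 - R $$ (1,1)"
    using trace_0 trace_1 by (simp_all only: eq_diff_eq add.commute)
  then have "R $$ (0,0) \<le> 1/2" "R $$ (3,3) \<le> 1/2"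
    using psd_diag_nonneg[OF R, of 2] psd_diag_nonneg[OF R, of 1] by simp_all
  have "hs_inner Pi1 R = p * R $$ (0,0) + q * (R $$ (0,3) + R $$ (3,0)) + r * R $$ (3,3)"
    using R by (simp add: hs_inner_Pi1 psd_def p_def q_def r_def)
  also have "\<dots> \<le> p * R $$ (0,0) + q * (R $$ (0,0) + R $$ (3,3)) + r * R $$ (3,3)"
    using psd_offdiag_le[OF R, of 0 3] \<open>0 \<le> q\<close> by (simp add: mult_left_mono)
  also have "\<dots> = (p + q) * R $$ (0,0) + (r + q) * R $$ (3,3)"
    by (simp add: algebra_simps)
  also have "\<dots> \<le> (p + q) * (1/2) + (r + q) * (1/2)"
    using \<open>0 \<le> p + q\<close> \<open>0 \<le> r + q\<close> \<open>R $$ (0,0) \<le> 1/2\<close> \<open>R $$ (3,3) \<le> 1/2\<close>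
    by (intro add_mono mult_left_mono)
  also have "\<dots> = p"
    by (simp add: p_def q_def r_def field_simps)
  finally show ?thesis unfolding p_def .
qed

lemma outer_u_entry:
  assumes "i < 4" "j < 4"
  shows "outer u_vec u_vec $$ (i,j) = (if i \<in> {0,3} \<and> j \<in> {0,3} then 1/2 else 0)"
  using assms by (simp add: outer_def u_vec_def flip: of_real_mult)

lemma blk_outer_u_trace: "a < 2 \<Longrightarrow> mtrace (blk 2 2 (outer u_vec u_vec) a a) = 1/2"
  by (auto simp: mtrace_def blk_def eval_nat_numeral outer_u_entry less_Suc_eq)

lemma hs_inner_Pi1_outer_u: "hs_inner Pi1 (outer u_vec u_vec) = complex_of_real ((2 + sqrt 2) / 4)"
proof -
  have "outer u_vec u_vec \<in> carrier_mat 4 4"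
    by (simp add: outer_def u_vec_def)
  then show ?thesis
    by (simp add: hs_inner_Pi1 outer_u_entry field_simps)
qed

lemma single_copy_identity_win:
  "hs_inner Pi1 (ext_id (diag_conj (\<lambda>_. 1) 2) 2 2 2 (outer u_vec u_vec))
     = complex_of_real ((2 + sqrt 2) / 4)"
proof -
  have "ext_id (diag_conj (\<lambda>_. 1) 2) 2 2 2 (outer u_vec u_vec) = outer u_vec u_vec"
    unfolding ext_id_diag_conj by (intro eq_matI) (simp_all add: diag_conj_def outer_def u_vec_def)
  then show ?thesis by (simp add: hs_inner_Pi1_outer_u)
qed

lemma single_copy_win_le:
  assumes "channel 2 2 \<Phi>"
  shows "hs_inner Pi1 (ext_id \<Phi> 2 2 2 (outer u_vec u_vec)) \<le> complex_of_real ((2 + sqrt 2) / 4)"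
proof (rule hs_inner_Pi1_le)
  define R where "R = ext_id \<Phi> 2 2 2 (outer u_vec u_vec)"
  have "psd (2 * 2) (outer u_vec u_vec)" by (rule psd_outer) (simp add: u_vec_def)
  then have "psd (2 * 2) R"
    using assms unfolding channel_def R_def by blast
  then show "psd 4 R" by simp
  have sum_2: "(\<Sum>x<(2::nat). f x) = f 0 + f 1" for f :: "nat \<Rightarrow> complex"
    by (simp add: numeral_2_eq_2)
  show "R $$ (0,0) + R $$ (2,2) = 1/2"
    using ext_id_block_trace[OF assms, of 0 2 "outer u_vec u_vec"]
    by (simp only: sum_2 blk_outer_u_trace R_def) simp
  show "R $$ (1,1) + R $$ (3,3) = 1/2"
    using ext_id_block_trace[OF assms, of 1 2 "outer u_vec u_vec"]
    by (simp only: sum_2 blk_outer_u_trace R_def) simp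
qed

lemma less_16_cases: "i < (16::nat) \<Longrightarrow> i \<in> {0,1,2,3,4,5,6,7,8,9,10,11,12,13,14,15}"
  by (simp add: less_Suc_eq eval_nat_numeral)

lemma swap_mid_less: "i < 16 \<Longrightarrow> swap_mid i < 16"
  using less_16_cases[of i] by (auto simp: swap_mid_def)

lemma swap_mid_swap_mid: "i < 16 \<Longrightarrow> swap_mid (swap_mid i) = i"
  using less_16_cases[of i] by (auto simp: swap_mid_def)

lemma Pswap_carrier: "Pswap \<in> carrier_mat 16 16"
  by (simp add: Pswap_def)

lemma Pswap_mult_entry:
  assumes "A \<in> carrier_mat 16 n" "i < 16" "j < n"
  shows "(Pswap * A) $$ (i,j) = A $$ (swap_mid i, j)"
proof -
  have "(Pswap * A) $$ (i,j) = (\<Sum>l<16. if l = swap_mid i then A $$ (l,j) else 0)"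
    using assms by (simp add: Pswap_def scalar_prod_def lessThan_atLeast0 if_distrib[of "\<lambda>x. x * _"]
        cong: if_cong)
  then show ?thesis using swap_mid_less[OF assms(2)] by simp
qed

lemma mult_transpose_Pswap_entry:
  assumes "A \<in> carrier_mat n 16" "i < n" "j < 16"
  shows "(A * transpose_mat Pswap) $$ (i,j) = A $$ (i, swap_mid j)"
proof -
  have "(A * transpose_mat Pswap) $$ (i,j) = (\<Sum>l<16. if l = swap_mid j then A $$ (i,l) else 0)"
    using assms by (simp add: Pswap_def scalar_prod_def lessThan_atLeast0 if_distrib[of "\<lambda>x. _ * x"]
        cong: if_cong)
  then show ?thesis using swap_mid_less[OF assms(3)] by simp
qed

lemma Pswap_conj_entry:
  assumes "A \<in> carrier_mat 16 16" "i < 16" "j < 16"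
  shows "(Pswap * A * transpose_mat Pswap) $$ (i,j) = A $$ (swap_mid i, swap_mid j)"
proof -
  have "Pswap * A \<in> carrier_mat 16 16" using assms(1) Pswap_carrier by auto
  then show ?thesis
    using assms swap_mid_less by (simp add: mult_transpose_Pswap_entry Pswap_mult_entry)
qed

text \<open>The prover's two-copy channel conjugates by \<open>diag(1,-1,-1,-1)\<close>, the reflection
  \<open>2|00\<rangle>\<langle>00| - I\<close> on \<open>X\<^sub>1 \<otimes> X\<^sub>2\<close>.\<close>
definition phase_flip :: "nat \<Rightarrow> complex" where
  "phase_flip i = (if i = 0 then 1 else -1)"

lemma channel_phase_flip: "channel 4 4 (diag_conj phase_flip 4)"
  by (rule channel_diag_conj) (simp_all add: phase_flip_def)

text \<open>The two-copy output state is pure; \<open>flipped_amp\<close> is its amplitude in the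
  ordering \<open>(Y\<^sub>1 Z\<^sub>1)(Y\<^sub>2 Z\<^sub>2)\<close>, where \<open>swap_mid i div 4\<close> indexes the prover's pair \<open>(Y\<^sub>1, Y\<^sub>2)\<close>.\<close>
definition flipped_amp :: "nat \<Rightarrow> complex" where
  "flipped_amp i = phase_flip (swap_mid i div 4) * (u_vec $ (i div 4) * u_vec $ (i mod 4))"

lemma flipped_amp_values:
  "flipped_amp 0 = 1/2" "flipped_amp 3 = - 1/2" "flipped_amp 12 = - 1/2" "flipped_amp 15 = - 1/2"
  by (simp_all add: flipped_amp_def phase_flip_def swap_mid_def u_vec_def flip: of_real_mult)

lemma flipped_amp_zero: "i < 16 \<Longrightarrow> i \<notin> {0,3,12,15} \<Longrightarrow> flipped_amp i = 0"
  using less_16_cases[of i] by (auto simp: flipped_amp_def u_vec_def)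

lemma two_copy_state_entry:
  assumes "i < 16" "j < 16"
  shows "(Pswap * ext_id (diag_conj phase_flip 4) 4 4 4
      (Pswap * kron (outer u_vec u_vec) (outer u_vec u_vec) * transpose_mat Pswap)
    * transpose_mat Pswap) $$ (i,j) = flipped_amp i * flipped_amp j"
proof -
  define K where "K = kron (outer u_vec u_vec) (outer u_vec u_vec)"
  have K: "K \<in> carrier_mat 16 16" by (simp add: K_def kron_def outer_def u_vec_def)
  have si: "swap_mid i < 16" "swap_mid j < 16" using assms by (simp_all add: swap_mid_less)
  have "(Pswap * ext_id (diag_conj phase_flip 4) 4 4 4 (Pswap * K * transpose_mat Pswap)
      * transpose_mat Pswap) $$ (i,j)
    = phase_flip (swap_mid i div 4) * phase_flip (swap_mid j div 4)
      * (Pswap * K * transpose_mat Pswap) $$ (swap_mid i, swap_mid j)"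
    using assms si
    by (simp add: Pswap_conj_entry ext_id_diag_conj diag_conj_def)
  also have "(Pswap * K * transpose_mat Pswap) $$ (swap_mid i, swap_mid j) = K $$ (i,j)"
    using assms si K by (simp add: Pswap_conj_entry swap_mid_swap_mid)
  also have "K $$ (i,j) = (u_vec $ (i div 4) * u_vec $ (i mod 4)) * (u_vec $ (j div 4) * u_vec $ (j mod 4))"
    using assms by (simp add: K_def kron_def outer_def u_vec_def less_mult_imp_div_less)
  finally show ?thesis by (simp add: K_def flipped_amp_def mult_ac)
qed

lemma two_copy_win_prob:
  "hs_inner (kron Pi1 Pi0 + kron Pi0 Pi1)
     (Pswap * ext_id (diag_conj phase_flip 4) 4 4 4
        (Pswap * kron (outer u_vec u_vec) (outer u_vec u_vec) * transpose_mat Pswap)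
      * transpose_mat Pswap) = 1"
proof -
  have Pi: "Pi1 \<in> carrier_mat 4 4" "Pi0 \<in> carrier_mat 4 4"
    using Pi1_carrier by (auto simp: Pi0_def)
  have state: "Pswap * ext_id (diag_conj phase_flip 4) 4 4 4
        (Pswap * kron (outer u_vec u_vec) (outer u_vec u_vec) * transpose_mat Pswap)
      * transpose_mat Pswap = mat 16 16 (\<lambda>(i,j). flipped_amp i * flipped_amp j)"
    using Pswap_carrier
    by (intro eq_matI) (simp_all add: two_copy_state_entry del: index_mult_mat(1))
  have "kron Pi1 Pi0 + kron Pi0 Pi1 \<in> carrier_mat 16 16"
    using Pi by (simp add: kron_def)
  then have "hs_inner (kron Pi1 Pi0 + kron Pi0 Pi1) (mat 16 16 (\<lambda>(i,j). flipped_amp i * flipped_amp j))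
    = (\<Sum>i\<in>{0,3,12,15}. \<Sum>j\<in>{0,3,12,15}.
         cnj ((kron Pi1 Pi0 + kron Pi0 Pi1) $$ (j,i)) * (flipped_amp j * flipped_amp i))"
    by (rule hs_inner_supported) (auto simp: flipped_amp_zero)
  also have "\<dots> = 1"
  proof -
    have "(complex_of_real (sqrt 2))\<^sup>2 = 2" by (simp flip: of_real_power)
    then show ?thesis
      using Pi by (simp add: kron_def Pi1_entries Pi0_entries flipped_amp_values)
        (simp add: field_simps power2_sum power2_diff flip: power2_eq_square)
  qed
  finally show ?thesis unfolding state .
qed

theorem mainTheorem2:
  shows "complex_of_real ((cos (pi/8))\<^sup>2) \<in>
           {hs_inner Pi1 (ext_id \<Phi> 2 2 2 (outer u_vec u_vec)) | \<Phi>. channel 2 2 \<Phi>}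
     \<and> (\<forall>\<Phi>. channel 2 2 \<Phi> \<longrightarrow>
           hs_inner Pi1 (ext_id \<Phi> 2 2 2 (outer u_vec u_vec)) \<le> complex_of_real ((cos (pi/8))\<^sup>2))
     \<and> (\<exists>\<Psi>. channel 4 4 \<Psi> \<and>
          hs_inner (kron Pi1 Pi0 + kron Pi0 Pi1)
            (Pswap * ext_id \<Psi> 4 4 4
               (Pswap * kron (outer u_vec u_vec) (outer u_vec u_vec) * transpose_mat Pswap)
             * transpose_mat Pswap) = 1)"
proof (intro conjI allI impI)
  have "channel 2 2 (diag_conj (\<lambda>_. 1) 2)" by (rule channel_diag_conj) simp_all
  then show "complex_of_real ((cos (pi/8))\<^sup>2) \<in>
      {hs_inner Pi1 (ext_id \<Phi> 2 2 2 (outer u_vec u_vec)) | \<Phi>. channel 2 2 \<Phi>}"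
    using single_copy_identity_win unfolding cos_pi_div_eight_sq by force
next
  fix \<Phi> assume "channel 2 2 \<Phi>"
  then show "hs_inner Pi1 (ext_id \<Phi> 2 2 2 (outer u_vec u_vec)) \<le> complex_of_real ((cos (pi/8))\<^sup>2)"
    unfolding cos_pi_div_eight_sq by (rule single_copy_win_le)
next
  show "\<exists>\<Psi>. channel 4 4 \<Psi> \<and>
      hs_inner (kron Pi1 Pi0 + kron Pi0 Pi1)
        (Pswap * ext_id \<Psi> 4 4 4
           (Pswap * kron (outer u_vec u_vec) (outer u_vec u_vec) * transpose_mat Pswap)
         * transpose_mat Pswap) = 1"
    using channel_phase_flip two_copy_win_prob by blast
qed

end
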